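(* Let $k$ be a field, $R=k[x_1,\ldots,x_n]$ with $n\ge2$, and let $I$ be an almost reverse lexicographic ideal whose last generator is $x_{n-1}^t$ for some $t>0$ (so $f_{n-1}(0)=t$). Let \[T=\{(\alpha_1,\ldots,\alpha_{n-2},\beta)\in\mathbb{Z}^{n-1}_{\ge0}: \alpha=(\alpha_1,\ldots,\alpha_{n-2})\in\mathcal{I}_{n-2},\ 0\le\beta<f_{n-1}(\alpha)\}.\] Let $s$ be a positive integer with $s\le|T|$, and let $A_1>A_2>\cdots>A_s$ be the $s$ largest elements of $T$ (so $A_s>B$ for every $B\in T\setminus\{A_1,\ldots,A_s\}$). Let $g:\{A_1,\ldots,A_s\}\to\mathbb{Z}_{>0}$ satisfy $t\le|A_i|+g(A_i)\le|A_j|+g(A_j)$ whenever $A_i>A_j$. Let $J$ be the ideal generated by $\mathcal{S}=\mathcal{G}(I)\cup\{x^{A_i}x_n^{g(A_i)}:1\le i\le s\}$. Then $J$ is almost reverse lexicographic and $\mathcal{G}(J)=\mathcal{S}$.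
   Context: Degree reverse lexicographic order: for $M=x^\alpha,N=x^\beta$, $M>N$ iff $\deg M>\deg N$, or degrees are equal and for the largest $s$ with $\alpha_s\neq\beta_s$ one has $\alpha_s<\beta_s$. For $\alpha\in\mathbb{Z}^s_{\ge0}$, $x^\alpha=x_1^{\alpha_1}\cdots x_s^{\alpha_s}$, $|\alpha|=\sum\alpha_j$, and $\alpha\le\beta$ iff $x^\alpha\le x^\beta$. Almost reverse lexicographic: for every monomial $M$ and every minimal monomial generator $N$ of $I$ with $\deg M=\deg N$ and $M>N$, $M\in I$. $\mathcal{G}(I)$ is the minimal monomial generating set. The last generator of $I$ is the element of $\mathcal{G}(I)$ of maximal degree that is smallest in the order among elements of $\mathcal{G}(I)$ of that degree. $f_1=\min\{t:x_1^t\in I\}$; for $i\ge2$, $\alpha\in\mathbb{Z}^{i-1}_{\ge0}$, $f_i(\alpha)=\min\{t\ge0:x^\alpha x_i^t\in I\}$. $\mathcal{I}_{n-2}=\{(\alpha_1,\ldots,\alpha_{n-2})\in\mathbb{Z}^{n-2}_{\ge0}: 0\le\alpha_1<f_1,\ 0\le\alpha_j<f_j(\alpha_1,\ldots,\alpha_{j-1})\ (2\le j\le n-2)\}$; for $n=2$ it consists of the empty tuple and $f_1$ of the empty tuple is $f_1$. *)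

theory Defs
  imports Main
begin

text \<open>Monomials of k[x_1,...,x_n] are represented by exponent vectors
  nat => nat supported on {1..n}.  A monomial ideal is represented by the set
  of exponent vectors of the monomials it contains (the field k plays no role).\<close>

definition mons :: "nat \<Rightarrow> (nat \<Rightarrow> nat) set" where
  "mons n = {a. \<forall>j. (j < 1 \<or> n < j) \<longrightarrow> a j = 0}"

definition mdeg :: "nat \<Rightarrow> (nat \<Rightarrow> nat) \<Rightarrow> nat" where
  "mdeg n a = (\<Sum>j\<in>{1..n}. a j)"

definition unitv :: "nat \<Rightarrow> nat \<Rightarrow> nat" where
  "unitv i = (\<lambda>j. if j = i then 1 else 0)"

definition mdvd :: "(nat \<Rightarrow> nat) \<Rightarrow> (nat \<Rightarrow> nat) \<Rightarrow> bool" where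
  "mdvd a b \<longleftrightarrow> (\<forall>j. a j \<le> b j)"

text \<open>Degree reverse lexicographic order: revlex_less n b a means x^b < x^a.\<close>
definition revlex_less :: "nat \<Rightarrow> (nat \<Rightarrow> nat) \<Rightarrow> (nat \<Rightarrow> nat) \<Rightarrow> bool" where
  "revlex_less n b a \<longleftrightarrow>
     mdeg n b < mdeg n a \<or>
     (mdeg n b = mdeg n a \<and>
      (\<exists>s\<in>{1..n}. a s \<noteq> b s \<and> (\<forall>r\<in>{1..n}. s < r \<longrightarrow> a r = b r) \<and> a s < b s))"

definition is_monomial_ideal :: "nat \<Rightarrow> (nat \<Rightarrow> nat) set \<Rightarrow> bool" where
  "is_monomial_ideal n I \<longleftrightarrow> I \<subseteq> mons n \<and>
     (\<forall>a\<in>I. \<forall>b\<in>mons n. mdvd a b \<longrightarrow> b \<in> I)"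

definition mideal_gen :: "nat \<Rightarrow> (nat \<Rightarrow> nat) set \<Rightarrow> (nat \<Rightarrow> nat) set" where
  "mideal_gen n S = {b\<in>mons n. \<exists>a\<in>S. mdvd a b}"

definition mingens :: "(nat \<Rightarrow> nat) set \<Rightarrow> (nat \<Rightarrow> nat) set" where
  "mingens I = {a\<in>I. \<forall>b\<in>I. mdvd b a \<longrightarrow> b = a}"

definition almost_revlex :: "nat \<Rightarrow> (nat \<Rightarrow> nat) set \<Rightarrow> bool" where
  "almost_revlex n I \<longleftrightarrow>
     (\<forall>M\<in>mons n. \<forall>N\<in>mingens I. mdeg n M = mdeg n N \<and> revlex_less n N M \<longrightarrow> M \<in> I)"

definition is_last_gen :: "nat \<Rightarrow> (nat \<Rightarrow> nat) set \<Rightarrow> (nat \<Rightarrow> nat) \<Rightarrow> bool" where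
  "is_last_gen n I L \<longleftrightarrow> L \<in> mingens I \<and>
     (\<forall>N\<in>mingens I. mdeg n N \<le> mdeg n L) \<and>
     (\<forall>N\<in>mingens I. mdeg n N = mdeg n L \<longrightarrow> N = L \<or> revlex_less n L N)"

text \<open>f_i(alpha) = min{t. x^alpha x_i^t in I}, alpha in Z^{i-1} (only entries
  1..i-1 of alpha are used); for i = 1 this is f_1.\<close>
definition fI :: "(nat \<Rightarrow> nat) set \<Rightarrow> nat \<Rightarrow> (nat \<Rightarrow> nat) \<Rightarrow> nat" where
  "fI I i a = (LEAST t. (\<lambda>j. if 1 \<le> j \<and> j < i then a j else if j = i then t else 0) \<in> I)"

definition Iset :: "(nat \<Rightarrow> nat) set \<Rightarrow> nat \<Rightarrow> (nat \<Rightarrow> nat) set" where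
  "Iset I m = {a. (\<forall>j. (j < 1 \<or> m < j) \<longrightarrow> a j = 0) \<and> (\<forall>j\<in>{1..m}. a j < fI I j a)}"

definition Tset :: "(nat \<Rightarrow> nat) set \<Rightarrow> nat \<Rightarrow> (nat \<Rightarrow> nat) set" where
  "Tset I n = {c. \<exists>a\<in>Iset I (n - 2). \<exists>b. b < fI I (n - 1) a \<and> c = a(n - 1 := b)}"

end

theory Submission
  imports Defs
begin

text \<open>Since x_{n-1}^t is the last generator of the almost revlex ideal I, no minimal generator
  of I involves x_n and every x_j^t with j < n lies in I; consequently T is exactly the set of
  monomials outside I that do not involve x_n.  The new generators x^{A_i} x_n^{g(A_i)} together
  with G(I) form an antichain because |A_i| + g(A_i) is monotone along the A_i.  If a monomial
  M = x^C x_n^c of the same degree lies above a new generator x^{A_i} x_n^{g(A_i)}, then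
  c \<le> g(A_i) and C > A_i; since the A_i are the largest elements of T, either x^C \<in> I or C = A_j
  with |A_j| + g(A_j) \<le> |M|, and then x^{A_j} x_n^{g(A_j)} divides M.\<close>

definition var_pow :: "nat \<Rightarrow> nat \<Rightarrow> nat \<Rightarrow> nat" where
  "var_pow j t = (\<lambda>k. t * unitv j k)"

definition mul_var_pow :: "nat \<Rightarrow> nat \<Rightarrow> (nat \<Rightarrow> nat) \<Rightarrow> nat \<Rightarrow> nat" where
  "mul_var_pow i c a = (\<lambda>j. a j + c * unitv i j)"

lemma var_pow_apply [simp]: "var_pow j t k = (if k = j then t else 0)"
  by (simp add: var_pow_def unitv_def)

lemma mul_var_pow_apply [simp]: "mul_var_pow i c a j = (if j = i then a j + c else a j)"
  by (simp add: mul_var_pow_def unitv_def)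

lemma mul_var_pow_split: "mul_var_pow i (a i) (a(i := 0)) = a"
  by (simp add: fun_eq_iff)

lemma mons_outside_zero: "a \<in> mons n \<Longrightarrow> j \<notin> {1..n} \<Longrightarrow> a j = 0"
  by (cases "j = 0") (auto simp: mons_def not_le)

lemma var_pow_in_mons: "j \<in> {1..n} \<Longrightarrow> var_pow j t \<in> mons n"
  by (auto simp: mons_def)

lemma mul_var_pow_in_mons: "a \<in> mons n \<Longrightarrow> i \<in> {1..n} \<Longrightarrow> mul_var_pow i c a \<in> mons n"
  by (auto simp: mons_def)

lemma mdeg_var_pow: "j \<in> {1..n} \<Longrightarrow> mdeg n (var_pow j t) = t"
  by (simp add: mdeg_def)

lemma mdeg_mul_var_pow:
  assumes "i \<in> {1..n}"
  shows "mdeg n (mul_var_pow i c a) = mdeg n a + c"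
proof -
  have "mul_var_pow i c a = (\<lambda>j. a j + var_pow i c j)"
    by (simp add: fun_eq_iff)
  then show ?thesis
    using mdeg_var_pow[OF assms] by (simp add: mdeg_def sum.distrib)
qed

lemma mdvd_refl [simp]: "mdvd a a"
  by (simp add: mdvd_def)

lemma mdvd_trans: "mdvd a b \<Longrightarrow> mdvd b c \<Longrightarrow> mdvd a c"
  unfolding mdvd_def using le_trans by blast

lemma mdvd_antisym: "mdvd a b \<Longrightarrow> mdvd b a \<Longrightarrow> a = b"
  unfolding mdvd_def by (rule ext) (meson antisym)

lemma mdvd_mul_var_pow_iff:
  assumes "a i = 0" "b i = 0"
  shows "mdvd (mul_var_pow i c a) (mul_var_pow i d b) \<longleftrightarrow> mdvd a b \<and> c \<le> d"
  unfolding mdvd_def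
proof safe
  fix j assume le: "\<forall>j. mul_var_pow i c a j \<le> mul_var_pow i d b j"
  show "a j \<le> b j" using le[rule_format, of j] assms by (cases "j = i") auto
  show "c \<le> d" using le[rule_format, of i] assms by simp
qed (simp add: add_mono)

lemma mdvd_of_mdvd_mul_var_pow: "b i = 0 \<Longrightarrow> mdvd b (mul_var_pow i c a) \<Longrightarrow> mdvd b a"
  unfolding mdvd_def by (metis mul_var_pow_apply zero_le)

lemma mdeg_less_if_mdvd:
  assumes "a \<in> mons n" "b \<in> mons n" "mdvd b a" "b \<noteq> a"
  shows "mdeg n b < mdeg n a"
proof -
  obtain j where j: "b j \<noteq> a j" using assms(4) by blast
  then have "j \<in> {1..n}" using mons_outside_zero[OF assms(1)] mons_outside_zero[OF assms(2)] by metis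
  moreover have "b j < a j" using j assms(3) by (simp add: mdvd_def le_neq_implies_less)
  ultimately show ?thesis
    using assms(3) unfolding mdeg_def mdvd_def by (intro sum_strict_mono_ex1) auto
qed

lemma revlex_less_irrefl: "\<not> revlex_less n a a"
  unfolding revlex_less_def by auto

lemma revlex_lessI:
  assumes "mdeg n a = mdeg n b" "s \<in> {1..n}" "a s < b s" "\<forall>r\<in>{1..n}. s < r \<longrightarrow> a r = b r"
  shows "revlex_less n b a"
  unfolding revlex_less_def using assms by (intro disjI2 conjI bexI[of _ s]) auto

lemma revlex_less_if_mdeg_less: "mdeg n b < mdeg n a \<Longrightarrow> revlex_less n b a"
  unfolding revlex_less_def by simp

lemma revlex_less_trans:
  assumes "revlex_less n c b" "revlex_less n b a"
  shows "revlex_less n c a"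
proof (cases "mdeg n c < mdeg n b \<or> mdeg n b < mdeg n a")
  case True
  then show ?thesis using assms unfolding revlex_less_def by auto
next
  case False
  then have d: "mdeg n c = mdeg n b" "mdeg n b = mdeg n a"
    using assms unfolding revlex_less_def by auto
  obtain s1 where s1: "s1 \<in> {1..n}" "\<forall>r\<in>{1..n}. s1 < r \<longrightarrow> b r = c r" "b s1 < c s1"
    using assms(1) d unfolding revlex_less_def by auto
  obtain s2 where s2: "s2 \<in> {1..n}" "\<forall>r\<in>{1..n}. s2 < r \<longrightarrow> a r = b r" "a s2 < b s2"
    using assms(2) d unfolding revlex_less_def by auto
  define s where "s = max s1 s2"
  have "a s < c s"
    using s1 s2 by (cases s1 s2 rule: linorder_cases) (force simp: s_def)+
  moreover have "s \<in> {1..n}" "\<forall>r\<in>{1..n}. s < r \<longrightarrow> a r = c r"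
    using s1 s2 unfolding s_def by auto
  ultimately show ?thesis
    using d by (intro revlex_lessI[of n a c s]) auto
qed

lemma revlex_less_if_last_var_less:
  "1 \<le> n \<Longrightarrow> mdeg n a = mdeg n b \<Longrightarrow> a n < b n \<Longrightarrow> revlex_less n b a"
  by (rule revlex_lessI[of n a b n]) auto

lemma revlex_less_last_var_le:
  assumes "revlex_less n b a" "mdeg n a = mdeg n b"
  shows "a n \<le> b n"
proof -
  obtain s where "s \<in> {1..n}" "\<forall>r\<in>{1..n}. s < r \<longrightarrow> a r = b r" "a s < b s"
    using assms unfolding revlex_less_def by auto
  then show ?thesis by (cases "s = n") auto
qed

lemma revlex_less_mul_last_var_pow_cancel:
  assumes "1 \<le> n" "a n = 0" "b n = 0"
    and deg: "mdeg n (mul_var_pow n c a) = mdeg n (mul_var_pow n d b)"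
    and less: "revlex_less n (mul_var_pow n d b) (mul_var_pow n c a)"
  shows "c \<le> d \<and> revlex_less n b a"
proof -
  have n: "n \<in> {1..n}" using assms(1) by simp
  have cd: "c \<le> d" using revlex_less_last_var_le[OF less deg] assms(2,3) by simp
  have deg': "mdeg n a + c = mdeg n b + d" using deg by (simp add: mdeg_mul_var_pow[OF n])
  show ?thesis
  proof (cases "c = d")
    case False
    then show ?thesis using cd deg' by (simp add: revlex_less_if_mdeg_less)
  next
    case True
    obtain s where s: "s \<in> {1..n}" "\<forall>r\<in>{1..n}. s < r \<longrightarrow> mul_var_pow n c a r = mul_var_pow n d b r"
      "mul_var_pow n c a s < mul_var_pow n d b s"
      using less deg unfolding revlex_less_def by auto
    then have "s \<noteq> n" using True assms(2,3) by auto
    then show ?thesis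
      using s True deg' assms(2,3) by (intro conjI revlex_lessI[of n a b s]) (auto split: if_splits)
  qed
qed

lemma almost_revlexD:
  "almost_revlex n I \<Longrightarrow> M \<in> mons n \<Longrightarrow> N \<in> mingens I \<Longrightarrow> mdeg n M = mdeg n N \<Longrightarrow>
    revlex_less n N M \<Longrightarrow> M \<in> I"
  unfolding almost_revlex_def by blast

lemma monomial_ideal_closed:
  "is_monomial_ideal n I \<Longrightarrow> a \<in> I \<Longrightarrow> b \<in> mons n \<Longrightarrow> mdvd a b \<Longrightarrow> b \<in> I"
  unfolding is_monomial_ideal_def by blast

lemma mingens_subset: "mingens I \<subseteq> I"
  unfolding mingens_def by blast

lemma ex_mingens_mdvd:
  assumes "is_monomial_ideal n I" "a \<in> I"
  shows "\<exists>b\<in>mingens I. mdvd b a"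
  using assms(2)
proof (induction "mdeg n a" arbitrary: a rule: less_induct)
  case less
  show ?case
  proof (cases "a \<in> mingens I")
    case True
    then show ?thesis using mdvd_refl by blast
  next
    case False
    then obtain b where b: "b \<in> I" "mdvd b a" "b \<noteq> a"
      using less.prems unfolding mingens_def by auto
    have "mdeg n b < mdeg n a"
      using mdeg_less_if_mdvd b less.prems assms(1) unfolding is_monomial_ideal_def by blast
    then obtain c where "c \<in> mingens I" "mdvd c b" using less.hyps b by blast
    then show ?thesis using b mdvd_trans by blast
  qed
qed

lemma subset_mideal_gen:
  assumes "is_monomial_ideal n I" "mingens I \<subseteq> S"
  shows "I \<subseteq> mideal_gen n S"
proof
  fix a assume a: "a \<in> I"
  then obtain b where "b \<in> mingens I" "mdvd b a"
    using ex_mingens_mdvd[OF assms(1)] by blast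
  moreover have "a \<in> mons n"
    using assms(1) a unfolding is_monomial_ideal_def by blast
  ultimately show "a \<in> mideal_gen n S"
    using assms(2) unfolding mideal_gen_def by blast
qed

lemma mingens_mideal_gen:
  assumes "S \<subseteq> mons n" and antichain: "\<And>a b. a \<in> S \<Longrightarrow> b \<in> S \<Longrightarrow> mdvd b a \<Longrightarrow> b = a"
  shows "mingens (mideal_gen n S) = S"
proof
  have S_in: "S \<subseteq> mideal_gen n S"
    using assms(1) mdvd_refl unfolding mideal_gen_def by blast
  show "mingens (mideal_gen n S) \<subseteq> S"
    using S_in unfolding mingens_def mideal_gen_def by blast
  show "S \<subseteq> mingens (mideal_gen n S)"
    using S_in antichain mdvd_trans mdvd_antisym unfolding mingens_def mideal_gen_def by blast
qed

lemma not_in_ideal_if_less_fI: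
  assumes "b < fI I j a"
  shows "(\<lambda>k. if 1 \<le> k \<and> k < j then a k else if k = j then b else 0) \<notin> I"
  using not_less_Least[OF assms[unfolded fI_def]] by simp

lemma less_fI_if_not_in_ideal:
  assumes I: "is_monomial_ideal n I" and C: "C \<in> mons n" "C \<notin> I"
    and j: "j \<in> {1..n}" "var_pow j t \<in> I"
    and below: "\<forall>k. 1 \<le> k \<and> k < j \<longrightarrow> a k = C k"
  shows "C j < fI I j a"
proof (rule ccontr)
  define P where "P = (\<lambda>x k. if 1 \<le> k \<and> k < j then a k else if k = j then x else (0::nat))"
  have "P x \<in> mons n" for x
    using j unfolding P_def mons_def by auto
  moreover have "mdvd (var_pow j t) (P t)"
    unfolding mdvd_def P_def by auto
  ultimately have "P t \<in> I"
    using monomial_ideal_closed[OF I j(2)] by blast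
  then have "P (fI I j a) \<in> I"
    unfolding fI_def P_def by (rule LeastI)
  moreover assume "\<not> C j < fI I j a"
  then have "mdvd (P (fI I j a)) C"
    unfolding mdvd_def P_def using below by auto
  ultimately show False
    using monomial_ideal_closed[OF I _ C(1)] C(2) by blast
qed

lemma Tset_memD:
  assumes "2 \<le> n" "C \<in> Tset I n"
  shows "C \<in> mons n \<and> C n = 0 \<and> C \<notin> I"
proof -
  obtain a b where a: "a \<in> Iset I (n - 2)" and b: "b < fI I (n - 1) a" and C: "C = a(n - 1 := b)"
    using assms(2) unfolding Tset_def by blast
  have supp: "\<forall>j. (j < 1 \<or> n - 2 < j) \<longrightarrow> a j = 0"
    using a by (simp add: Iset_def)
  have C_eq: "C = (\<lambda>k. if 1 \<le> k \<and> k < n - 1 then a k else if k = n - 1 then b else 0)"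
  proof
    fix k
    show "C k = (if 1 \<le> k \<and> k < n - 1 then a k else if k = n - 1 then b else 0)"
    proof (cases "k = n - 1")
      case False
      show ?thesis
      proof (cases "1 \<le> k \<and> k < n - 1")
        case outside: False
        then have "k < 1 \<or> n - 2 < k"
          using False by presburger
        then have "a k = 0"
          by (rule supp[rule_format])
        then show ?thesis
          using outside False C by simp
      qed (simp add: C)
    qed (simp add: C)
  qed
  show ?thesis
    using not_in_ideal_if_less_fI[OF b] assms(1) unfolding C_eq mons_def by auto
qed

lemma Tset_memI:
  assumes n: "2 \<le> n" and I: "is_monomial_ideal n I"
    and var_pows: "\<And>j. j \<in> {1..n - 1} \<Longrightarrow> var_pow j t \<in> I"
    and C: "C \<in> mons n" "C n = 0" "C \<notin> I"
  shows "C \<in> Tset I n"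
proof -
  define a where "a = C(n - 1 := 0)"
  have less_fI: "C j < fI I j a" if "j \<in> {1..n - 1}" for j
    using less_fI_if_not_in_ideal[OF I C(1,3) _ var_pows[OF that]] that unfolding a_def by auto
  have "a \<in> Iset I (n - 2)"
    unfolding Iset_def
  proof (intro CollectI conjI allI impI ballI)
    fix j assume "j < 1 \<or> n - 2 < j"
    then show "a j = 0"
      using C(1,2) n unfolding a_def mons_def by (cases "j = n") auto
  next
    fix j assume "j \<in> {1..n - 2}"
    then show "a j < fI I j a"
      using less_fI[of j] unfolding a_def by auto
  qed
  moreover have "C (n - 1) < fI I (n - 1) a"
    using less_fI n by simp
  moreover have "C = a(n - 1 := C (n - 1))"
    unfolding a_def by simp
  ultimately show ?thesis
    unfolding Tset_def by blast
qed

lemma last_gen_mingens_last_var_zero: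
  assumes n: "2 \<le> n" and arl: "almost_revlex n I"
    and last: "is_last_gen n I (var_pow (n - 1) t)" and N: "N \<in> mingens I"
  shows "N n = 0"
proof (rule ccontr)
  let ?L = "var_pow (n - 1) t"
  assume "N n \<noteq> 0"
  have n1: "n - 1 \<in> {1..n}" using n by auto
  have L: "?L \<in> mingens I" "mdeg n N \<le> t" "mdeg n N = t \<Longrightarrow> N = ?L \<or> revlex_less n ?L N"
    using last N mdeg_var_pow[OF n1] unfolding is_last_gen_def by auto
  have "n \<noteq> n - 1" using n by linarith
  then have "?L n = 0" by simp
  show False
  proof (cases "mdeg n N = t")
    case True
    have "N \<noteq> ?L"
      using \<open>N n \<noteq> 0\<close> \<open>?L n = 0\<close> by metis
    with L(3)[OF True] have "revlex_less n ?L N"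
      by blast
    then have "N n \<le> ?L n"
      using revlex_less_last_var_le True mdeg_var_pow[OF n1] by metis
    then show False using \<open>N n \<noteq> 0\<close> \<open>?L n = 0\<close> by simp
  next
    case False
    let ?M = "var_pow (n - 1) (mdeg n N)"
    have "revlex_less n N ?M"
      using n \<open>N n \<noteq> 0\<close> mdeg_var_pow[OF n1] by (intro revlex_less_if_last_var_less) auto
    then have "?M \<in> I"
      using almost_revlexD[OF arl var_pow_in_mons[OF n1] N] mdeg_var_pow[OF n1] by simp
    moreover have "mdvd ?M ?L"
      using L(2) by (simp add: mdvd_def)
    moreover have "?M (n - 1) \<noteq> ?L (n - 1)"
      using False by simp
    ultimately show False
      using L(1) unfolding mingens_def by fastforce
  qed
qed

lemma last_gen_var_pow_in_ideal:
  assumes n: "2 \<le> n" and arl: "almost_revlex n I"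
    and last: "is_last_gen n I (var_pow (n - 1) t)" and j: "j \<in> {1..n - 1}"
  shows "var_pow j t \<in> I"
proof -
  have L: "var_pow (n - 1) t \<in> mingens I"
    using last unfolding is_last_gen_def by blast
  show ?thesis
  proof (cases "var_pow j t = var_pow (n - 1) t")
    case True
    then show ?thesis using L mingens_subset by auto
  next
    case False
    then have "j \<noteq> n - 1" "t \<noteq> 0"
      by (auto simp: var_pow_def)
    then have lt: "j < n - 1" "0 < t"
      using j by auto
    have range: "j \<in> {1..n}" "n - 1 \<in> {1..n}"
      using j n by auto
    then have deg: "mdeg n (var_pow j t) = mdeg n (var_pow (n - 1) t)"
      by (simp add: mdeg_var_pow)
    have "var_pow j t \<in> mons n"
      using range by (simp add: var_pow_in_mons)
    moreover have "revlex_less n (var_pow (n - 1) t) (var_pow j t)"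
      using lt range deg by (intro revlex_lessI[of n _ _ "n - 1"]) auto
    ultimately show ?thesis
      by (rule almost_revlexD[OF arl _ L deg])
  qed
qed

locale revlex_extension =
  fixes n t s :: nat and I :: "(nat \<Rightarrow> nat) set"
    and A :: "nat \<Rightarrow> nat \<Rightarrow> nat" and g :: "(nat \<Rightarrow> nat) \<Rightarrow> nat"
  assumes n: "2 \<le> n"
    and ideal: "is_monomial_ideal n I"
    and arl: "almost_revlex n I"
    and last: "is_last_gen n I (var_pow (n - 1) t)"
    and s_pos: "0 < s"
    and A_in_T: "i \<in> {1..s} \<Longrightarrow> A i \<in> Tset I n"
    and A_dec: "i \<in> {1..s} \<Longrightarrow> j \<in> {1..s} \<Longrightarrow> i < j \<Longrightarrow> revlex_less n (A j) (A i)"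
    and A_largest: "B \<in> Tset I n - A ` {1..s} \<Longrightarrow> revlex_less n B (A s)"
    and g_pos: "i \<in> {1..s} \<Longrightarrow> 0 < g (A i)"
    and g_mono: "i \<in> {1..s} \<Longrightarrow> j \<in> {1..s} \<Longrightarrow> revlex_less n (A j) (A i) \<Longrightarrow>
                  mdeg n (A i) + g (A i) \<le> mdeg n (A j) + g (A j)"
begin

definition new_gen :: "nat \<Rightarrow> nat \<Rightarrow> nat" where
  "new_gen i = mul_var_pow n (g (A i)) (A i)"

definition gens :: "(nat \<Rightarrow> nat) set" where
  "gens = mingens I \<union> new_gen ` {1..s}"

lemma n_in_range: "n \<in> {1..n}"
  using n by simp

lemma A_in_T_unfolded: "i \<in> {1..s} \<Longrightarrow> A i \<in> mons n \<and> A i n = 0 \<and> A i \<notin> I"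
  using Tset_memD[OF n A_in_T] .

lemma mingens_last_var_zero: "N \<in> mingens I \<Longrightarrow> N n = 0"
  using last_gen_mingens_last_var_zero[OF n arl last] .

lemma mdeg_new_gen: "mdeg n (new_gen i) = mdeg n (A i) + g (A i)"
  unfolding new_gen_def using mdeg_mul_var_pow[OF n_in_range] .

lemma gens_subset_mons: "gens \<subseteq> mons n"
  using ideal A_in_T_unfolded mul_var_pow_in_mons[OF _ n_in_range] mingens_subset
  unfolding gens_def new_gen_def is_monomial_ideal_def by blast

lemma new_gen_antichain:
  assumes i: "i \<in> {1..s}" and j: "j \<in> {1..s}" and dvd: "mdvd (new_gen j) (new_gen i)"
  shows "new_gen j = new_gen i"
proof -
  have "mdvd (A j) (A i)" "g (A j) \<le> g (A i)"
    using dvd A_in_T_unfolded[OF i] A_in_T_unfolded[OF j] mdvd_mul_var_pow_iff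
    unfolding new_gen_def by blast+
  moreover have "\<not> mdeg n (A j) < mdeg n (A i)"
  proof
    assume "mdeg n (A j) < mdeg n (A i)"
    then show False
      using g_mono[OF i j revlex_less_if_mdeg_less] \<open>g (A j) \<le> g (A i)\<close> by simp
  qed
  ultimately show ?thesis
    using A_in_T_unfolded[OF i] A_in_T_unfolded[OF j] mdeg_less_if_mdvd unfolding new_gen_def by metis
qed

lemma gens_antichain:
  assumes x: "x \<in> gens" and y: "y \<in> gens" and dvd: "mdvd y x"
  shows "y = x"
proof (cases "x \<in> mingens I")
  case x_min: True
  show ?thesis
  proof (cases "y \<in> mingens I")
    case True
    then show ?thesis using x_min dvd unfolding mingens_def by blast
  next
    case False
    then obtain i where i: "i \<in> {1..s}" "y = new_gen i"
      using y unfolding gens_def by blast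
    have "y n \<le> x n" using dvd by (simp add: mdvd_def)
    then show ?thesis
      using i g_pos[OF i(1)] mingens_last_var_zero[OF x_min] unfolding new_gen_def by simp
  qed
next
  case False
  then obtain i where i: "i \<in> {1..s}" "x = new_gen i"
    using x unfolding gens_def by blast
  show ?thesis
  proof (cases "y \<in> mingens I")
    case True
    then have "mdvd y (A i)"
      using dvd i mdvd_of_mdvd_mul_var_pow mingens_last_var_zero unfolding new_gen_def by blast
    then have "A i \<in> I"
      using True mingens_subset monomial_ideal_closed[OF ideal] A_in_T_unfolded[OF i(1)] by blast
    then show ?thesis using A_in_T_unfolded[OF i(1)] by blast
  next
    case False
    then obtain j where "j \<in> {1..s}" "y = new_gen j"
      using y unfolding gens_def by blast
    then show ?thesis
      using new_gen_antichain i dvd by blast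
  qed
qed

lemma mingens_mideal_gen_gens: "mingens (mideal_gen n gens) = gens"
  using mingens_mideal_gen[OF gens_subset_mons gens_antichain] .

lemma Tset_above_A_in_range:
  assumes i: "i \<in> {1..s}" and C: "C \<in> Tset I n" "revlex_less n (A i) C"
  shows "C \<in> A ` {1..s}"
proof (rule ccontr)
  assume "C \<notin> A ` {1..s}"
  then have "revlex_less n (A i) (A s)"
    using A_largest C revlex_less_trans by blast
  moreover have "A i = A s \<or> revlex_less n (A s) (A i)"
    using A_dec[OF i, of s] i s_pos by force
  ultimately show False
    using revlex_less_trans revlex_less_irrefl by metis
qed

lemma mem_mideal_gen_gens_if_above_new_gen:
  assumes i: "i \<in> {1..s}" and M: "M \<in> mons n"
    and deg: "mdeg n M = mdeg n (new_gen i)" and less: "revlex_less n (new_gen i) M"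
  shows "M \<in> mideal_gen n gens"
proof -
  define C c where "C = M(n := 0)" and "c = M n"
  have M_eq: "M = mul_var_pow n c C"
    unfolding C_def c_def by (rule mul_var_pow_split[symmetric])
  have C_n: "C n = 0" and C_mons: "C \<in> mons n"
    using M unfolding C_def mons_def by auto
  have deg': "mdeg n C + c = mdeg n (A i) + g (A i)"
    using deg mdeg_new_gen mdeg_mul_var_pow[OF n_in_range] M_eq by simp
  show ?thesis
  proof (cases "C \<in> I")
    case True
    have "mdvd C M"
      unfolding C_def mdvd_def by simp
    then show ?thesis
      using monomial_ideal_closed[OF ideal True M] subset_mideal_gen[OF ideal] gens_def by blast
  next
    case False
    have C_T: "C \<in> Tset I n"
      using Tset_memI[OF n ideal last_gen_var_pow_in_ideal[OF n arl last] C_mons C_n False] .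
    have "revlex_less n (mul_var_pow n (g (A i)) (A i)) (mul_var_pow n c C)"
      using less M_eq unfolding new_gen_def by simp
    then have key: "c \<le> g (A i) \<and> revlex_less n (A i) C"
      using revlex_less_mul_last_var_pow_cancel[of n C "A i" c "g (A i)"] C_n A_in_T_unfolded[OF i] n deg'
      by (simp add: mdeg_mul_var_pow[OF n_in_range])
    have "C \<in> A ` {1..s}"
      using Tset_above_A_in_range[OF i C_T conjunct2[OF key]] .
    then obtain j where C_eq: "C = A j" and j: "j \<in> {1..s}"
      by (rule imageE)
    \<comment> \<open>A_i < A_j, so the monotonicity of g bounds g(A_j) by the x_n-exponent of M.\<close>
    have "mdeg n (A j) + g (A j) \<le> mdeg n (A i) + g (A i)"
      using g_mono[OF j i] key C_eq by simp
    then have "g (A j) \<le> c"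
      using deg' C_eq by simp
    then have "mdvd (new_gen j) M"
      using M_eq C_eq A_in_T_unfolded[OF j] mdvd_mul_var_pow_iff unfolding new_gen_def by simp
    moreover have "new_gen j \<in> gens"
      using j by (simp add: gens_def)
    ultimately show ?thesis
      using M unfolding mideal_gen_def by blast
  qed
qed

lemma almost_revlex_mideal_gen_gens: "almost_revlex n (mideal_gen n gens)"
  unfolding almost_revlex_def
proof (intro ballI impI)
  fix M N assume M: "M \<in> mons n" and N: "N \<in> mingens (mideal_gen n gens)"
    and MN: "mdeg n M = mdeg n N \<and> revlex_less n N M"
  show "M \<in> mideal_gen n gens"
  proof (cases "N \<in> mingens I")
    case True
    then have "M \<in> I"
      using almost_revlexD[OF arl M True] MN by simp
    then show ?thesis
      using subset_mideal_gen[OF ideal] gens_def by blast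
  next
    case False
    then obtain i where "i \<in> {1..s}" "N = new_gen i"
      using N mingens_mideal_gen_gens unfolding gens_def by blast
    then show ?thesis
      using mem_mideal_gen_gens_if_above_new_gen M MN by blast
  qed
qed

end

theorem lemma3p7:
  fixes n t s :: nat and I :: "(nat \<Rightarrow> nat) set"
    and A :: "nat \<Rightarrow> (nat \<Rightarrow> nat)" and g :: "(nat \<Rightarrow> nat) \<Rightarrow> nat"
  assumes n2: "2 \<le> n"
    and Iideal: "is_monomial_ideal n I"
    and arl: "almost_revlex n I"
    and tpos: "0 < t"
    and last: "is_last_gen n I (\<lambda>j. t * unitv (n - 1) j)"
    and spos: "0 < s"
    and sT: "s \<le> card (Tset I n)"
    and AT: "\<forall>i\<in>{1..s}. A i \<in> Tset I n"
    and Adec: "\<forall>i\<in>{1..s}. \<forall>j\<in>{1..s}. i < j \<longrightarrow> revlex_less n (A j) (A i)"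
    and Alargest: "\<forall>B\<in>Tset I n - A ` {1..s}. revlex_less n B (A s)"
    and gpos: "\<forall>i\<in>{1..s}. 0 < g (A i)"
    and gt: "\<forall>i\<in>{1..s}. t \<le> mdeg n (A i) + g (A i)"
    and gmono: "\<forall>i\<in>{1..s}. \<forall>j\<in>{1..s}. revlex_less n (A j) (A i) \<longrightarrow>
                  mdeg n (A i) + g (A i) \<le> mdeg n (A j) + g (A j)"
  shows "almost_revlex n (mideal_gen n (mingens I \<union> {(\<lambda>j. A i j + g (A i) * unitv n j) | i. i \<in> {1..s}}))
       \<and> mingens (mideal_gen n (mingens I \<union> {(\<lambda>j. A i j + g (A i) * unitv n j) | i. i \<in> {1..s}}))
         = mingens I \<union> {(\<lambda>j. A i j + g (A i) * unitv n j) | i. i \<in> {1..s}}"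
proof -
  have last': "is_last_gen n I (var_pow (n - 1) t)"
    unfolding var_pow_def by (rule last)
  interpret revlex_extension n t s I A g
    by unfold_locales
      (fact n2 Iideal arl last' spos AT[rule_format] Adec[rule_format] Alargest[rule_format]
        gpos[rule_format] gmono[rule_format])+
  have "mingens I \<union> {(\<lambda>j. A i j + g (A i) * unitv n j) | i. i \<in> {1..s}} = gens"
    by (simp only: gens_def new_gen_def[abs_def] mul_var_pow_def setcompr_eq_image Collect_mem_eq)
  then show ?thesis
    using almost_revlex_mideal_gen_gens mingens_mideal_gen_gens by simp
qed

end
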